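(* Let $G$ be a compact group with normalized Haar measure $\mu$, and let $H$ be a (closed) subgroup of $G$ with finite index $[G:H]$. Then $H$ is normal in $G$ if and only if, for every $\rho\in\hat G$, $\operatorname{rank}\widehat{\chi_H}(\rho)$ is either $d_\rho$ or $0$.
   Context: $\chi_H$ is the characteristic function of $H$. $\hat G$ is the set of (equivalence classes of) irreducible unitary representations of $G$, $d_\rho$ the dimension of $\rho$, and $\widehat{\chi_H}(\rho)=\int_G \chi_H(x)\rho(x)^\dagger\,d\mu(x)$. *)

theory Defs
  imports "HOL-Analysis.Analysis" "HOL-Probability.Probability"
    "Jordan_Normal_Form.Schur_Decomposition" "Jordan_Normal_Form.DL_Rank"
begin

text \<open>Groups are written additively via the class group_add, which does NOT
assume commutativity. A compact group is a compact Hausdorff topological group.\<close>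

definition compact_group :: "'g::{group_add, t2_space} itself \<Rightarrow> bool" where
  "compact_group _ \<longleftrightarrow> compact (UNIV :: 'g set)
     \<and> continuous_on UNIV (\<lambda>p::'g \<times> 'g. fst p + snd p)
     \<and> continuous_on UNIV (\<lambda>x::'g. - x)"

definition normalized_haar :: "'g::{group_add, topological_space} measure \<Rightarrow> bool" where
  "normalized_haar \<mu> \<longleftrightarrow> prob_space \<mu> \<and> sets \<mu> = sets borel
     \<and> (\<forall>g A. A \<in> sets borel \<longrightarrow> emeasure \<mu> ((\<lambda>x. g + x) ` A) = emeasure \<mu> A)"

definition is_subgroup :: "'g::group_add set \<Rightarrow> bool" where
  "is_subgroup H \<longleftrightarrow> 0 \<in> H \<and> (\<forall>x\<in>H. \<forall>y\<in>H. x + y \<in> H) \<and> (\<forall>x\<in>H. - x \<in> H)"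

definition left_cosets :: "'g::group_add set \<Rightarrow> 'g set set" where
  "left_cosets H = {(\<lambda>x. g + x) ` H | g. True}"

definition normal_subgroup :: "'g::group_add set \<Rightarrow> bool" where
  "normal_subgroup H \<longleftrightarrow> is_subgroup H \<and> (\<forall>g h. h \<in> H \<longrightarrow> g + h + - g \<in> H)"

definition unitary_rep :: "nat \<Rightarrow> ('g::{group_add, topological_space} \<Rightarrow> complex mat) \<Rightarrow> bool" where
  "unitary_rep n \<rho> \<longleftrightarrow>
     (\<forall>x. \<rho> x \<in> carrier_mat n n \<and> mat_adjoint (\<rho> x) * \<rho> x = 1\<^sub>m n)
     \<and> (\<forall>x y. \<rho> (x + y) = \<rho> x * \<rho> y)
     \<and> (\<forall>i<n. \<forall>j<n. continuous_on UNIV (\<lambda>x. \<rho> x $$ (i, j)))"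

definition invariant_subspace :: "nat \<Rightarrow> ('g \<Rightarrow> complex mat) \<Rightarrow> complex vec set \<Rightarrow> bool" where
  "invariant_subspace n \<rho> W \<longleftrightarrow> W \<subseteq> carrier_vec n \<and> 0\<^sub>v n \<in> W
     \<and> (\<forall>v\<in>W. \<forall>w\<in>W. v + w \<in> W) \<and> (\<forall>c. \<forall>v\<in>W. c \<cdot>\<^sub>v v \<in> W)
     \<and> (\<forall>x. \<forall>v\<in>W. \<rho> x *\<^sub>v v \<in> W)"

definition irreducible_unitary_rep :: "nat \<Rightarrow> ('g::{group_add, topological_space} \<Rightarrow> complex mat) \<Rightarrow> bool" where
  "irreducible_unitary_rep n \<rho> \<longleftrightarrow> n > 0 \<and> unitary_rep n \<rho>
     \<and> (\<forall>W. invariant_subspace n \<rho> W \<longrightarrow> W = {0\<^sub>v n} \<or> W = carrier_vec n)"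

definition fourier :: "'g measure \<Rightarrow> ('g \<Rightarrow> complex) \<Rightarrow> nat \<Rightarrow> ('g \<Rightarrow> complex mat) \<Rightarrow> complex mat" where
  "fourier \<mu> f n \<rho> = mat n n (\<lambda>(i, j). LINT x|\<mu>. f x * cnj (\<rho> x $$ (j, i)))"

definition mat_rank :: "complex mat \<Rightarrow> nat" where
  "mat_rank A = vec_space.rank (dim_row A) A"

end

(*
  Translation invariance of the Haar measure gives hat(chi_H)(rho) rho(h) = hat(chi_H)(rho) for
  h in H, and hat(chi_H)(rho) v = mu(H) v for every H-fixed vector v, where mu(H) > 0 because G
  is covered by finitely many translates of H.  Hence the rank of hat(chi_H)(rho) is 0 exactly
  when rho has no nonzero H-fixed vector, and it is d_rho exactly when H acts trivially.  It
  remains to show that H is normal iff in every irreducible rho the H-fixed vectors are 0 or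
  everything.

  If H is normal, the H-fixed vectors form a G-invariant subspace, so irreducibility decides.
  If H is not normal, consider the permutation representation of G on the finite set G/H
  (continuous, since a closed subgroup of finite index is open).  The basis vector of the coset H
  is H-fixed, but its translate by some g is not.  Such a pair (fixed vector, element moving it
  out of the fixed space) survives restriction to an invariant subspace or to its orthogonal
  complement, so by induction on the dimension it occurs in an irreducible representation,
  where the H-fixed vectors are then neither 0 nor everything.
*)

theory Submission
  imports Defs
begin

lemma dim_mat_adjoint [simp]:
  "dim_row (mat_adjoint A) = dim_col A" "dim_col (mat_adjoint A) = dim_row A"
  unfolding mat_adjoint_def by auto

lemma index_mat_adjoint [simp]:
  "i < dim_col A \<Longrightarrow> j < dim_row A \<Longrightarrow> mat_adjoint A $$ (i, j) = cnj (A $$ (j, i))"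
  unfolding mat_adjoint_def mat_of_rows_def by simp

lemma mat_adjoint_carrier [simp]: "A \<in> carrier_mat n m \<Longrightarrow> mat_adjoint A \<in> carrier_mat m n"
  unfolding carrier_mat_def by simp

lemma mat_adjoint_mat_adjoint [simp]: "mat_adjoint (mat_adjoint (A :: complex mat)) = A"
  by (rule eq_matI) simp_all

lemma mat_adjoint_zero [simp]: "mat_adjoint (0\<^sub>m n m :: complex mat) = 0\<^sub>m m n"
  by (rule eq_matI) simp_all

lemma mat_adjoint_mult:
  assumes "A \<in> carrier_mat n k" "B \<in> carrier_mat k m"
  shows "mat_adjoint (A * B :: complex mat) = mat_adjoint B * mat_adjoint A"
proof (rule eq_matI)
  fix i j
  assume "i < dim_row (mat_adjoint B * mat_adjoint A)" "j < dim_col (mat_adjoint B * mat_adjoint A)"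
  then have i: "i < m" and j: "j < n" using assms by simp_all
  have "mat_adjoint (A * B) $$ (i, j) = cnj (\<Sum>l\<in>{0..<k}. A $$ (j, l) * B $$ (l, i))"
    using assms i j by (simp add: scalar_prod_def)
  also have "\<dots> = (\<Sum>l\<in>{0..<k}. cnj (B $$ (l, i)) * cnj (A $$ (j, l)))"
    by (simp add: mult.commute)
  also have "\<dots> = (mat_adjoint B * mat_adjoint A) $$ (i, j)"
    using assms i j by (simp add: scalar_prod_def)
  finally show "mat_adjoint (A * B) $$ (i, j) = (mat_adjoint B * mat_adjoint A) $$ (i, j)" .
qed (use assms in simp_all)

lemma mult_mat_vec_zero [simp]: "A \<in> carrier_mat n m \<Longrightarrow> A *\<^sub>v 0\<^sub>v m = (0\<^sub>v n :: complex vec)"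
  by (rule eq_vecI) simp_all

lemma smult_zero_vec [simp]: "(c :: complex) \<cdot>\<^sub>v 0\<^sub>v n = 0\<^sub>v n"
  by (rule eq_vecI) simp_all

lemma mult_unit_vec_eq_col:
  "A \<in> carrier_mat n m \<Longrightarrow> j < m \<Longrightarrow> A *\<^sub>v unit_vec m j = col (A :: complex mat) j"
  by (rule eq_vecI) simp_all

lemma eq_mat_on_vecI:
  assumes "(A :: complex mat) \<in> carrier_mat n m" "B \<in> carrier_mat n m"
    and "\<And>x. x \<in> carrier_vec m \<Longrightarrow> A *\<^sub>v x = B *\<^sub>v x"
  shows "A = B"
proof (rule mat_col_eqI)
  fix j assume "j < dim_col B"
  then have j: "j < m" using assms by simp
  then show "col A j = col B j"
    using assms(3)[of "unit_vec m j"] mult_unit_vec_eq_col[OF assms(1) j]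
      mult_unit_vec_eq_col[OF assms(2) j]
    by simp
qed (use assms in simp_all)

lemma vec_eq_if_minus_eq_0:
  assumes "(a :: complex vec) \<in> carrier_vec n" "b \<in> carrier_vec n" "a - b = 0\<^sub>v n"
  shows "a = b"
proof (rule eq_vecI)
  fix i assume "i < dim_vec b"
  then have "i < n" using assms by simp
  then show "a $ i = b $ i" using arg_cong[OF assms(3), of "\<lambda>v. v $ i"] assms(1,2) by simp
qed (use assms in simp)

lemma mat_rank_zero_mat: "mat_rank (0\<^sub>m n n :: complex mat) = 0"
  unfolding mat_rank_def using vec_space.rank_0I[of n n] by simp

lemma mat_rank_smult_one_mat:
  assumes "(c :: complex) \<noteq> 0"
  shows "mat_rank (c \<cdot>\<^sub>m 1\<^sub>m n) = n"
  unfolding mat_rank_def using vec_space.det_rank_iff[of "c \<cdot>\<^sub>m 1\<^sub>m n" n] assms by simp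

lemma mat_rank_full_imp_inj:
  assumes A: "(A :: complex mat) \<in> carrier_mat n n" and rank: "mat_rank A = n"
    and x: "x \<in> carrier_vec n" and y: "y \<in> carrier_vec n" and eq: "A *\<^sub>v x = A *\<^sub>v y"
  shows "x = y"
proof -
  have "det A \<noteq> 0" using vec_space.det_rank_iff[OF A] A rank unfolding mat_rank_def by simp
  moreover have "A *\<^sub>v (x - y) = 0\<^sub>v n"
    using mult_minus_distrib_mat_vec[OF A x y] eq mult_mat_vec_carrier[OF A y] by simp
  moreover have "x - y \<in> carrier_vec n" using x y by simp
  ultimately have "x - y = 0\<^sub>v n" using det_0_iff_vec_prod_zero_field[OF A] by metis
  then show ?thesis using vec_eq_if_minus_eq_0 x y by blast
qed

lemma mat_rank_nonzero_if_mult_vec_nonzero: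
  assumes A: "(A :: complex mat) \<in> carrier_mat n n" and x: "x \<in> carrier_vec n"
    and Ax: "A *\<^sub>v x \<noteq> 0\<^sub>v n"
  shows "mat_rank A \<noteq> 0"
proof -
  interpret vs: vec_space "TYPE(complex)" n .
  have "\<exists>j<n. col A j \<noteq> 0\<^sub>v n"
  proof (rule ccontr)
    assume "\<not> (\<exists>j<n. col A j \<noteq> 0\<^sub>v n)"
    then have "A = 0\<^sub>m n n" using A by (intro mat_col_eqI) auto
    moreover have "0\<^sub>m n n *\<^sub>v x = 0\<^sub>v n" using x by (intro eq_vecI) simp_all
    ultimately show False using Ax by simp
  qed
  then obtain j where j: "j < n" "col A j \<noteq> 0\<^sub>v n" by blast
  have "col A j \<in> carrier_vec n" using A j by simp
  then have "vs.lin_indpt {col A j}"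
    using vs.lin_dep_iff_in_span[of "{}" "col A j"] vs.span_empty vs.lin_dep_def j(2) by auto
  moreover have "{col A j} \<subseteq> set (cols A)" using j A by (simp add: cols_def)
  ultimately have "card {col A j} \<le> vs.rank A" using vs.rank_ge_card_indpt[OF A] by blast
  then show ?thesis unfolding mat_rank_def using A by simp
qed

lemma continuous_on_index_mult_mat:
  fixes M N :: "'a::topological_space \<Rightarrow> complex mat"
  assumes "\<And>g. M g \<in> carrier_mat a k" "\<And>g. N g \<in> carrier_mat k b"
    and "\<And>i l. i < a \<Longrightarrow> l < k \<Longrightarrow> continuous_on UNIV (\<lambda>g. M g $$ (i, l))"
    and "\<And>l j. l < k \<Longrightarrow> j < b \<Longrightarrow> continuous_on UNIV (\<lambda>g. N g $$ (l, j))"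
    and "i < a" "j < b"
  shows "continuous_on UNIV (\<lambda>g. (M g * N g) $$ (i, j))"
proof -
  have "(M g * N g) $$ (i, j) = (\<Sum>l\<in>{0..<k}. M g $$ (i, l) * N g $$ (l, j))" for g
    using assms(1,2)[of g] assms(5,6) by (simp add: scalar_prod_def)
  moreover have "continuous_on UNIV (\<lambda>g. \<Sum>l\<in>{0..<k}. M g $$ (i, l) * N g $$ (l, j))"
    using assms(3-6) by (intro continuous_on_sum continuous_on_mult) auto
  ultimately show ?thesis by simp
qed

lemma unitary_rep_carrier: "unitary_rep n \<sigma> \<Longrightarrow> \<sigma> x \<in> carrier_mat n n"
  unfolding unitary_rep_def by auto

lemma unitary_rep_adjoint_mult: "unitary_rep n \<sigma> \<Longrightarrow> mat_adjoint (\<sigma> x) * \<sigma> x = 1\<^sub>m n"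
  unfolding unitary_rep_def by auto

lemma unitary_rep_add: "unitary_rep n \<sigma> \<Longrightarrow> \<sigma> (x + y) = \<sigma> x * \<sigma> y"
  unfolding unitary_rep_def by auto

lemma unitary_rep_continuous:
  "unitary_rep n \<sigma> \<Longrightarrow> i < n \<Longrightarrow> j < n \<Longrightarrow> continuous_on UNIV (\<lambda>x. \<sigma> x $$ (i, j))"
  unfolding unitary_rep_def by auto

lemma unitary_rep_zero:
  assumes "unitary_rep n (\<sigma> :: 'g::{group_add, topological_space} \<Rightarrow> complex mat)"
  shows "\<sigma> 0 = 1\<^sub>m n"
proof -
  note c = unitary_rep_carrier[OF assms]
  have "\<sigma> 0 = (mat_adjoint (\<sigma> 0) * \<sigma> 0) * \<sigma> 0"
    using unitary_rep_adjoint_mult[OF assms] c[of 0] by simp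
  also have "\<dots> = mat_adjoint (\<sigma> 0) * (\<sigma> 0 * \<sigma> 0)"
    using c by (meson mat_adjoint_carrier assoc_mult_mat)
  also have "\<sigma> 0 * \<sigma> 0 = \<sigma> 0" using unitary_rep_add[OF assms, of 0 0] by simp
  finally show ?thesis using unitary_rep_adjoint_mult[OF assms] by simp
qed

lemma unitary_rep_mat_adjoint:
  assumes "unitary_rep n (\<sigma> :: 'g::{group_add, topological_space} \<Rightarrow> complex mat)"
  shows "mat_adjoint (\<sigma> g) = \<sigma> (- g)"
proof -
  note c = unitary_rep_carrier[OF assms]
  have "\<sigma> g * \<sigma> (- g) = 1\<^sub>m n"
    using unitary_rep_add[OF assms, of g "- g"] unitary_rep_zero[OF assms] by simp
  then have "mat_adjoint (\<sigma> g) = mat_adjoint (\<sigma> g) * (\<sigma> g * \<sigma> (- g))"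
    using c[of g] by simp
  also have "\<dots> = (mat_adjoint (\<sigma> g) * \<sigma> g) * \<sigma> (- g)"
    by (rule assoc_mult_mat[symmetric, OF mat_adjoint_carrier[OF c] c c])
  finally show ?thesis using unitary_rep_adjoint_mult[OF assms] c[of "- g"] by simp
qed

definition fixed_vecs :: "nat \<Rightarrow> ('g \<Rightarrow> complex mat) \<Rightarrow> 'g set \<Rightarrow> complex vec set" where
  "fixed_vecs n \<sigma> H = {v \<in> carrier_vec n. \<forall>h\<in>H. \<sigma> h *\<^sub>v v = v}"

lemma fixed_vecs_add:
  assumes "\<And>g. \<sigma> g \<in> carrier_mat n n" "v \<in> fixed_vecs n \<sigma> H" "w \<in> fixed_vecs n \<sigma> H"
  shows "v + w \<in> fixed_vecs n \<sigma> H"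
  using assms mult_add_distrib_mat_vec[OF assms(1)] unfolding fixed_vecs_def by simp

lemma fixed_vecs_minus:
  assumes "\<And>g. \<sigma> g \<in> carrier_mat n n" "v \<in> fixed_vecs n \<sigma> H" "w \<in> fixed_vecs n \<sigma> H"
  shows "v - w \<in> fixed_vecs n \<sigma> H"
  using assms mult_minus_distrib_mat_vec[OF assms(1)] unfolding fixed_vecs_def by simp

lemma invariant_subspace_fixed_vecs:
  assumes H: "normal_subgroup H" and \<sigma>: "unitary_rep n \<sigma>"
  shows "invariant_subspace n \<sigma> (fixed_vecs n \<sigma> H)"
  unfolding invariant_subspace_def
proof (intro conjI ballI allI)
  note c = unitary_rep_carrier[OF \<sigma>]
  show "fixed_vecs n \<sigma> H \<subseteq> carrier_vec n" "0\<^sub>v n \<in> fixed_vecs n \<sigma> H"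
    unfolding fixed_vecs_def using c by auto
  show "v + w \<in> fixed_vecs n \<sigma> H" if "v \<in> fixed_vecs n \<sigma> H" "w \<in> fixed_vecs n \<sigma> H" for v w
    using fixed_vecs_add[OF c that] .
  show "a \<cdot>\<^sub>v v \<in> fixed_vecs n \<sigma> H" if "v \<in> fixed_vecs n \<sigma> H" for a v
    using that mult_mat_vec[OF c] unfolding fixed_vecs_def by simp
  show "\<sigma> g *\<^sub>v v \<in> fixed_vecs n \<sigma> H" if v: "v \<in> fixed_vecs n \<sigma> H" for g v
  proof -
    have v_carrier: "v \<in> carrier_vec n" using v unfolding fixed_vecs_def by simp
    have "\<sigma> h *\<^sub>v (\<sigma> g *\<^sub>v v) = \<sigma> g *\<^sub>v v" if h: "h \<in> H" for h
    proof -
      have conj: "- g + h + g \<in> H"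
        using H h unfolding normal_subgroup_def by (metis minus_minus)
      have "\<sigma> h * \<sigma> g = \<sigma> g * \<sigma> (- g + h + g)"
        using unitary_rep_add[OF \<sigma>] by (metis add.assoc add_minus_cancel)
      then have "\<sigma> h *\<^sub>v (\<sigma> g *\<^sub>v v) = \<sigma> g *\<^sub>v (\<sigma> (- g + h + g) *\<^sub>v v)"
        using c v_carrier by (metis assoc_mult_mat_vec)
      then show ?thesis using v conj unfolding fixed_vecs_def by simp
    qed
    then show ?thesis unfolding fixed_vecs_def using mult_mat_vec_carrier[OF c v_carrier] by simp
  qed
qed

lemma fixed_vecs_trivial_or_full_if_normal:
  assumes "normal_subgroup H" "irreducible_unitary_rep n \<sigma>"
  shows "fixed_vecs n \<sigma> H = {0\<^sub>v n} \<or> fixed_vecs n \<sigma> H = carrier_vec n"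
  using assms invariant_subspace_fixed_vecs unfolding irreducible_unitary_rep_def by blast

lemma fixed_vecs_proper_if_moved:
  assumes \<sigma>: "unitary_rep n \<sigma>" and v: "v \<in> fixed_vecs n \<sigma> H" "\<sigma> g *\<^sub>v v \<notin> fixed_vecs n \<sigma> H"
  shows "fixed_vecs n \<sigma> H \<noteq> {0\<^sub>v n}" "fixed_vecs n \<sigma> H \<noteq> carrier_vec n"
proof -
  have "v \<in> carrier_vec n" using v unfolding fixed_vecs_def by simp
  then have "\<sigma> g *\<^sub>v v \<in> carrier_vec n" by (rule mult_mat_vec_carrier[OF unitary_rep_carrier[OF \<sigma>]])
  then show "fixed_vecs n \<sigma> H \<noteq> carrier_vec n" using v by blast
  show "fixed_vecs n \<sigma> H \<noteq> {0\<^sub>v n}"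
    using v unitary_rep_carrier[OF \<sigma>] by auto
qed

section \<open>Subrepresentations and irreducible constituents\<close>

lemma submodule_if_invariant_subspace:
  assumes "invariant_subspace m \<sigma> W"
  shows "submodule class_ring W (module_vec TYPE(complex) m)"
proof -
  interpret cvs: vec_space "TYPE(complex)" m .
  show ?thesis
    by (rule submodule.intro)
      (use assms cvs.module_axioms in \<open>auto simp: invariant_subspace_def module_vec_simps\<close>)
qed

context
  fixes m :: nat
begin

interpretation cvs: cof_vec_space m "TYPE(complex)" .

lemma lin_indpt_basis_of_subspace:
  assumes W: "submodule class_ring W cvs.V" and proper: "W \<noteq> carrier_vec m"
  obtains S where "finite S" "S \<subseteq> W" "cvs.lin_indpt S" "cvs.span S = W" "card S < m"
proof -
  have W_carrier: "W \<subseteq> carrier_vec m" using submodule.subset[OF W] by simp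
  define P where "P S \<longleftrightarrow> S \<subseteq> W \<and> cvs.lin_indpt S" for S
  have bounded: "finite S \<and> card S \<le> m" if "P S" for S
    using cvs.li_le_dim[OF cvs.fin_dim, of S] cvs.dim_is_n W_carrier that unfolding P_def by auto
  have "P {}" unfolding P_def using cvs.lin_dep_def by auto
  then obtain S where S: "finite S" "maximal S P" using maximal_exists[of P m "{}"] bounded by blast
  have SW: "S \<subseteq> W" "cvs.lin_indpt S" using S(2) unfolding maximal_def P_def by auto
  have S_carrier: "S \<subseteq> carrier_vec m" using SW W_carrier by auto
  have span: "cvs.span S = W"
  proof
    show "cvs.span S \<subseteq> W" using cvs.span_is_subset[OF SW(1) W] .
    show "W \<subseteq> cvs.span S"
    proof
      fix w assume w: "w \<in> W"
      show "w \<in> cvs.span S"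
      proof (rule ccontr)
        assume w_span: "w \<notin> cvs.span S"
        then have "w \<notin> S" using cvs.in_own_span[OF S_carrier] by blast
        then have "P (S \<union> {w})"
          using cvs.lin_dep_iff_in_span[OF S_carrier SW(2), of w] w_span w W_carrier SW
          unfolding P_def by auto
        then show False using S(2) \<open>w \<notin> S\<close> unfolding maximal_def by blast
      qed
    qed
  qed
  have "card S < m"
  proof (rule ccontr)
    assume "\<not> card S < m"
    then have "cvs.basis S"
      using cvs.dim_li_is_basis[OF cvs.fin_dim S(1) S_carrier SW(2)] cvs.dim_is_n by simp
    then show False using span proper unfolding cvs.basis_def by simp
  qed
  then show thesis using that S(1) SW span by blast
qed

lemma span_map_smult:
  assumes us: "set us \<subseteq> carrier_vec m" and c: "\<And>i. i < length us \<Longrightarrow> c i \<noteq> 0"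
  shows "cvs.span (set (map (\<lambda>i. c i \<cdot>\<^sub>v us ! i) [0..<length us])) = cvs.span (set us)"
    (is "cvs.span (set ?vs) = _")
proof -
  have vs: "set ?vs \<subseteq> carrier_vec m" using us nth_mem by fastforce
  show ?thesis
  proof (intro equalityI cvs.span_is_subset cvs.span_is_submodule subsetI)
    fix v assume "v \<in> set ?vs"
    then obtain i where i: "i < length us" "v = c i \<cdot>\<^sub>v us ! i" by auto
    have "us ! i \<in> cvs.span (set us)" using cvs.in_own_span[OF us] i by auto
    then show "v \<in> cvs.span (set us)" using cvs.smult_in_span[OF us] i(2) by simp
  next
    fix u assume "u \<in> set us"
    then obtain i where i: "i < length us" "u = us ! i" by (auto simp: in_set_conv_nth)
    have "us ! i \<in> carrier_vec m" using us i(1) nth_mem by blast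
    then have u: "u = (1 / c i) \<cdot>\<^sub>v (?vs ! i)" using i c[OF i(1)] by (simp add: smult_smult_assoc)
    have "?vs ! i \<in> set ?vs" using i by simp
    then have "?vs ! i \<in> cvs.span (set ?vs)" using cvs.in_own_span[OF vs] by blast
    then show "u \<in> cvs.span (set ?vs)" unfolding u by (rule cvs.smult_in_span[OF vs])
  qed (use us vs in auto)
qed

lemma orthonormal_cols_of_corthogonal:
  assumes orth: "corthogonal us" and us: "set us \<subseteq> carrier_vec m"
  obtains B where "B \<in> carrier_mat m (length us)" "mat_adjoint B * B = 1\<^sub>m (length us)"
    "cvs.span (set (cols B)) = cvs.span (set us)"
proof -
  define r where "r = length us"
  have us_carrier: "us ! i \<in> carrier_vec m" if "i < r" for i
    using us that unfolding r_def by auto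
  have norm_pos: "us ! i \<bullet>c us ! i = complex_of_real (Re (us ! i \<bullet>c us ! i))
      \<and> Re (us ! i \<bullet>c us ! i) > 0" if i: "i < r" for i
  proof -
    have "us ! i \<noteq> 0\<^sub>v m"
      using corthogonalD[OF orth, of i i] i us_carrier[OF i] unfolding r_def by auto
    then have "us ! i \<bullet>c us ! i > 0" using conjugate_square_greater_0_vec[OF us_carrier[OF i]]
      by simp
    then show ?thesis by (simp add: less_complex_def complex_eq_iff)
  qed
  define c where "c i = complex_of_real (1 / sqrt (Re (us ! i \<bullet>c us ! i)))" for i
  define vs where "vs = map (\<lambda>i. c i \<cdot>\<^sub>v us ! i) [0..<r]"
  define B where "B = mat_of_cols m vs"
  have vs_carrier: "set vs \<subseteq> carrier_vec m" unfolding vs_def using us_carrier by auto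
  have vs_length: "length vs = r" unfolding vs_def by simp
  then have B_carrier: "B \<in> carrier_mat m r" unfolding B_def using mat_of_cols_carrier(1)[of m vs]
    by simp
  have B_index: "B $$ (k, i) = c i * us ! i $ k" if "k < m" "i < r" for k i
    unfolding B_def vs_def using that us_carrier[OF that(2)] by (simp add: mat_of_cols_def)
  have "mat_adjoint B * B = 1\<^sub>m r"
  proof (rule eq_matI)
    fix i j assume "i < dim_row (1\<^sub>m r :: complex mat)" "j < dim_col (1\<^sub>m r :: complex mat)"
    then have i: "i < r" and j: "j < r" by auto
    have "(mat_adjoint B * B) $$ (i, j) = (\<Sum>k\<in>{0..<m}. cnj (B $$ (k, i)) * B $$ (k, j))"
      using B_carrier i j by (simp add: scalar_prod_def)
    also have "\<dots> = (\<Sum>k\<in>{0..<m}. c i * c j * (us ! j $ k * cnj (us ! i $ k)))"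
      by (intro sum.cong refl) (simp add: B_index i j c_def mult_ac)
    also have "\<dots> = c i * c j * (us ! j \<bullet>c us ! i)"
      using us_carrier[OF i] us_carrier[OF j] by (simp add: scalar_prod_def sum_distrib_left)
    also have "\<dots> = 1\<^sub>m r $$ (i, j)"
    proof (cases "i = j")
      case True
      define a where "a = Re (us ! i \<bullet>c us ! i)"
      have a: "a > 0" "us ! i \<bullet>c us ! i = complex_of_real a" using norm_pos[OF i] unfolding a_def
        by auto
      have real: "1 / sqrt a * (1 / sqrt a) * a = 1" using a(1) by (simp add: field_simps)
      have "c i * c i * (us ! i \<bullet>c us ! i) = complex_of_real (1 / sqrt a * (1 / sqrt a) * a)"
        unfolding c_def a(2) by (simp only: Re_complex_of_real of_real_mult)
      also have "\<dots> = 1" unfolding real by simp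
      finally show ?thesis using True i by simp
    next
      case False
      then show ?thesis using corthogonalD[OF orth, of j i] i j unfolding r_def by simp
    qed
    finally show "(mat_adjoint B * B) $$ (i, j) = 1\<^sub>m r $$ (i, j)" .
  qed (use B_carrier in simp_all)
  moreover have "cvs.span (set vs) = cvs.span (set us)"
    unfolding vs_def r_def using norm_pos unfolding r_def c_def
    by (intro span_map_smult[OF us]) fastforce
  ultimately show thesis
    using that B_carrier vs_carrier unfolding r_def B_def by simp
qed

lemma orthonormal_basis_of_subspace:
  assumes W: "submodule class_ring W cvs.V" and proper: "W \<noteq> carrier_vec m"
  obtains r B where "r < m" "B \<in> carrier_mat m r" "mat_adjoint B * B = 1\<^sub>m r"
    "W = (\<lambda>x. B *\<^sub>v x) ` carrier_vec r"
proof -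
  obtain S where S: "finite S" "S \<subseteq> W" "cvs.lin_indpt S" "cvs.span S = W" "card S < m"
    using lin_indpt_basis_of_subspace[OF W proper] .
  obtain ws where ws: "set ws = S" "distinct ws" using finite_distinct_list[OF S(1)] by blast
  have "S \<subseteq> carrier_vec m" using S(2) submodule.subset[OF W] by simp
  then have gs: "cvs.span (set ws) = cvs.span (set (gram_schmidt m ws))"
    "corthogonal (gram_schmidt m ws)" "set (gram_schmidt m ws) \<subseteq> carrier_vec m"
    "length (gram_schmidt m ws) = length ws"
    using cvs.gram_schmidt_result[OF _ ws(2) _ refl] S(3) ws(1) by auto
  obtain B where B: "B \<in> carrier_mat m (length ws)" "mat_adjoint B * B = 1\<^sub>m (length ws)"
    "cvs.span (set (cols B)) = W"
    using orthonormal_cols_of_corthogonal[OF gs(2,3)] gs(1,4) ws(1) S(4) by metis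
  have "W = (\<lambda>x. B *\<^sub>v x) ` carrier_vec (length ws)"
    using cvs.col_space_eq[OF B(1)] B(1) B(3) unfolding cvs.col_space_def by auto
  moreover have "length ws < m" using S(5) ws distinct_card by metis
  ultimately show thesis using that B(1,2) by blast
qed

end

lemma compression_mat_adjoint:
  fixes \<sigma> :: "'g::{group_add, topological_space} \<Rightarrow> complex mat"
  assumes \<sigma>: "unitary_rep m \<sigma>" and B: "B \<in> carrier_mat m r"
  shows "mat_adjoint (mat_adjoint B * \<sigma> g * B) = mat_adjoint B * \<sigma> (- g) * B"
proof -
  note c = unitary_rep_carrier[OF \<sigma>]
  have A: "mat_adjoint B \<in> carrier_mat r m" using B by simp
  have "mat_adjoint (mat_adjoint B * \<sigma> g * B) = mat_adjoint B * (mat_adjoint (\<sigma> g) * B)"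
    using mat_adjoint_mult[OF mult_carrier_mat[OF A c] B] mat_adjoint_mult[OF A c[of g]] by simp
  then show ?thesis
    using unitary_rep_mat_adjoint[OF \<sigma>] assoc_mult_mat[OF A c[of "- g"] B] by simp
qed

lemma compression_add:
  fixes \<sigma> :: "'g::{group_add, topological_space} \<Rightarrow> complex mat"
  assumes \<sigma>: "unitary_rep m \<sigma>" and B: "B \<in> carrier_mat m r"
    and intertwine: "\<And>g. \<sigma> g * B = B * (mat_adjoint B * \<sigma> g * B)"
  shows "mat_adjoint B * \<sigma> (g + g') * B
    = (mat_adjoint B * \<sigma> g * B) * (mat_adjoint B * \<sigma> g' * B)"
proof -
  define A where "A = mat_adjoint B"
  note c = unitary_rep_carrier[OF \<sigma>]
  have A: "A \<in> carrier_mat r m" unfolding A_def using B by simp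
  have A\<sigma>: "A * \<sigma> g \<in> carrier_mat r m" using A c[of g] by simp
  have "(A * \<sigma> g * B) * (A * \<sigma> g' * B) = (A * \<sigma> g) * (B * (A * \<sigma> g' * B))"
    by (rule assoc_mult_mat[OF A\<sigma> B mult_carrier_mat[OF mult_carrier_mat[OF A c] B]])
  also have "\<dots> = (A * \<sigma> g) * (\<sigma> g' * B)" using intertwine unfolding A_def by simp
  also have "\<dots> = A * (\<sigma> g * \<sigma> g') * B"
    by (simp only: assoc_mult_mat[OF A\<sigma> c[of g'] B, symmetric]
        assoc_mult_mat[OF A c[of g] c[of g']])
  finally show ?thesis unfolding A_def unitary_rep_add[OF \<sigma>] by simp
qed

lemma unitary_rep_compression:
  fixes \<sigma> :: "'g::{group_add, topological_space} \<Rightarrow> complex mat"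
  assumes \<sigma>: "unitary_rep m \<sigma>" and B: "B \<in> carrier_mat m r" and iso: "mat_adjoint B * B = 1\<^sub>m r"
    and intertwine: "\<And>g. \<sigma> g * B = B * (mat_adjoint B * \<sigma> g * B)"
  shows "unitary_rep r (\<lambda>g. mat_adjoint B * \<sigma> g * B)"
    and "mat_adjoint B * \<sigma> g = (mat_adjoint B * \<sigma> g * B) * mat_adjoint B"
proof -
  define A where "A = mat_adjoint B"
  define \<tau> where "\<tau> g = A * \<sigma> g * B" for g
  note c = unitary_rep_carrier[OF \<sigma>]
  have A: "A \<in> carrier_mat r m" unfolding A_def using B by simp
  have \<tau>_carrier: "\<tau> g \<in> carrier_mat r r" for g unfolding \<tau>_def using A c[of g] B by simp
  have \<tau>_add: "\<tau> (g + g') = \<tau> g * \<tau> g'" for g g'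
    unfolding \<tau>_def A_def by (rule compression_add[OF \<sigma> B intertwine])
  have \<tau>_adjoint: "mat_adjoint (\<tau> g) = \<tau> (- g)" for g
    unfolding \<tau>_def A_def by (rule compression_mat_adjoint[OF \<sigma> B])
  show "unitary_rep r \<tau>"
    unfolding unitary_rep_def
  proof (intro conjI allI impI)
    fix x
    show "\<tau> x \<in> carrier_mat r r" by (rule \<tau>_carrier)
    have "\<tau> 0 = 1\<^sub>m r" unfolding \<tau>_def A_def using unitary_rep_zero[OF \<sigma>] B iso by simp
    then show "mat_adjoint (\<tau> x) * \<tau> x = 1\<^sub>m r" using \<tau>_adjoint \<tau>_add[of "- x" x] by simp
  next
    fix x y show "\<tau> (x + y) = \<tau> x * \<tau> y" by (rule \<tau>_add)
  next
    fix i j assume "i < r" "j < r"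
    have "continuous_on UNIV (\<lambda>g. (\<sigma> g * B) $$ (k, l))" if "k < m" "l < r" for k l
      using c B unitary_rep_continuous[OF \<sigma>] that by (intro continuous_on_index_mult_mat) auto
    then have "continuous_on UNIV (\<lambda>g. (A * (\<sigma> g * B)) $$ (i, j))"
      using A mult_carrier_mat[OF c B] \<open>i < r\<close> \<open>j < r\<close>
      by (intro continuous_on_index_mult_mat[where M = "\<lambda>_. A" and N = "\<lambda>g. \<sigma> g * B"]) auto
    moreover have "\<tau> g = A * (\<sigma> g * B)" for g unfolding \<tau>_def using assoc_mult_mat[OF A c B] .
    ultimately show "continuous_on UNIV (\<lambda>g. \<tau> g $$ (i, j))" by simp
  qed
  have "mat_adjoint (\<sigma> (- g) * B) = mat_adjoint (B * \<tau> (- g))"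
    using intertwine[of "- g"] unfolding \<tau>_def A_def by simp
  then show "A * \<sigma> g = \<tau> g * A"
    using unitary_rep_mat_adjoint[OF \<sigma>] \<tau>_adjoint[of "- g"] c[of "- g"] B \<tau>_carrier[of "- g"]
    unfolding A_def by (simp add: mat_adjoint_mult)
qed

lemma subrep_of_invariant_subspace:
  fixes \<sigma> :: "'g::{group_add, topological_space} \<Rightarrow> complex mat"
  assumes \<sigma>: "unitary_rep m \<sigma>" and W: "invariant_subspace m \<sigma> W" and proper: "W \<noteq> carrier_vec m"
  obtains r B \<tau> where "r < m" "B \<in> carrier_mat m r" "mat_adjoint B * B = 1\<^sub>m r"
    "W = (\<lambda>x. B *\<^sub>v x) ` carrier_vec r" "unitary_rep r \<tau>"
    "\<And>g. \<sigma> g * B = B * \<tau> g" "\<And>g. mat_adjoint B * \<sigma> g = \<tau> g * mat_adjoint B"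
proof -
  obtain r B where r: "r < m" and B: "B \<in> carrier_mat m r" and iso: "mat_adjoint B * B = 1\<^sub>m r"
    and range: "W = (\<lambda>x. B *\<^sub>v x) ` carrier_vec r"
    using orthonormal_basis_of_subspace[OF submodule_if_invariant_subspace[OF W] proper] .
  define A where "A = mat_adjoint B"
  note c = unitary_rep_carrier[OF \<sigma>]
  have A: "A \<in> carrier_mat r m" unfolding A_def using B by simp
  have intertwine: "\<sigma> g * B = B * (A * \<sigma> g * B)" for g
  proof (rule eq_mat_on_vecI)
    show "\<sigma> g * B \<in> carrier_mat m r" "B * (A * \<sigma> g * B) \<in> carrier_mat m r" using A B c[of g] by auto
    fix x :: "complex vec" assume x: "x \<in> carrier_vec r"
    have "\<sigma> g *\<^sub>v (B *\<^sub>v x) \<in> W"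
      using W x unfolding range invariant_subspace_def by blast
    then obtain y where y: "y \<in> carrier_vec r" "\<sigma> g *\<^sub>v (B *\<^sub>v x) = B *\<^sub>v y" unfolding range
      by blast
    have "(\<sigma> g * B) *\<^sub>v x = B *\<^sub>v y" using assoc_mult_mat_vec[OF c B x] y(2) by simp
    also have "\<dots> = B *\<^sub>v ((A * B) *\<^sub>v y)" using iso y(1) unfolding A_def by simp
    also have "(A * B) *\<^sub>v y = A *\<^sub>v (\<sigma> g *\<^sub>v (B *\<^sub>v x))"
      using assoc_mult_mat_vec[OF A B y(1)] y(2) by simp
    also have "\<dots> = (A * \<sigma> g * B) *\<^sub>v x"
      using assoc_mult_mat_vec[OF mult_carrier_mat[OF A c] B x]
        assoc_mult_mat_vec[OF A c, of "B *\<^sub>v x"]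
        B x by simp
    also have "B *\<^sub>v ((A * \<sigma> g * B) *\<^sub>v x) = (B * (A * \<sigma> g * B)) *\<^sub>v x"
      using assoc_mult_mat_vec[OF B mult_carrier_mat[OF mult_carrier_mat[OF A c] B] x] by simp
    finally show "(\<sigma> g * B) *\<^sub>v x = (B * (A * \<sigma> g * B)) *\<^sub>v x" .
  qed
  show thesis
    using that[OF r B iso range] unitary_rep_compression[OF \<sigma> B iso] intertwine
    unfolding A_def by blast
qed

lemma fixed_vecs_intertwiner_iff:
  assumes B: "B \<in> carrier_mat m r" "mat_adjoint B * B = 1\<^sub>m r"
    and \<sigma>: "\<And>g. \<sigma> g \<in> carrier_mat m m" and \<tau>: "\<And>g. \<tau> g \<in> carrier_mat r r"
    and intertwine: "\<And>g. \<sigma> g * B = B * \<tau> g" and x: "x \<in> carrier_vec r"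
  shows "B *\<^sub>v x \<in> fixed_vecs m \<sigma> H \<longleftrightarrow> x \<in> fixed_vecs r \<tau> H"
proof -
  have B_inj: "y = z" if "y \<in> carrier_vec r" "z \<in> carrier_vec r" "B *\<^sub>v y = B *\<^sub>v z" for y z
  proof -
    have "(mat_adjoint B * B) *\<^sub>v y = (mat_adjoint B * B) *\<^sub>v z"
      using assoc_mult_mat_vec[OF mat_adjoint_carrier[OF B(1)] B(1) that(1)]
        assoc_mult_mat_vec[OF mat_adjoint_carrier[OF B(1)] B(1) that(2)] that(3) by simp
    then show ?thesis using that B(2) by simp
  qed
  have \<sigma>B: "\<sigma> h *\<^sub>v (B *\<^sub>v x) = B *\<^sub>v (\<tau> h *\<^sub>v x)" for h
    using assoc_mult_mat_vec[OF \<sigma> B(1) x] assoc_mult_mat_vec[OF B(1) \<tau> x] intertwine by simp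
  have "\<sigma> h *\<^sub>v (B *\<^sub>v x) = B *\<^sub>v x \<longleftrightarrow> \<tau> h *\<^sub>v x = x" for h
  proof
    assume "\<sigma> h *\<^sub>v (B *\<^sub>v x) = B *\<^sub>v x"
    then show "\<tau> h *\<^sub>v x = x" using \<sigma>B B_inj[OF mult_mat_vec_carrier[OF \<tau> x] x] by simp
  qed (simp add: \<sigma>B)
  then show ?thesis unfolding fixed_vecs_def using x mult_mat_vec_carrier[OF B(1) x] by simp
qed

lemma moved_fixed_vec_in_subrep:
  fixes \<sigma> :: "'g::{group_add, topological_space} \<Rightarrow> complex mat"
  assumes \<sigma>: "unitary_rep m \<sigma>" and W: "invariant_subspace m \<sigma> W" "W \<noteq> carrier_vec m"
    and w: "w \<in> W" "w \<in> fixed_vecs m \<sigma> H" "\<sigma> g *\<^sub>v w \<notin> fixed_vecs m \<sigma> H"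
  shows "\<exists>r<m. \<exists>\<tau> x. unitary_rep r \<tau> \<and> x \<in> fixed_vecs r \<tau> H \<and> \<tau> g *\<^sub>v x \<notin> fixed_vecs r \<tau> H"
proof -
  obtain r B \<tau> where r: "r < m" and B: "B \<in> carrier_mat m r" "mat_adjoint B * B = 1\<^sub>m r"
    and range: "W = (\<lambda>x. B *\<^sub>v x) ` carrier_vec r" and \<tau>: "unitary_rep r \<tau>"
    and intertwine: "\<And>g. \<sigma> g * B = B * \<tau> g"
    using subrep_of_invariant_subspace[OF \<sigma> W] by metis
  note fixed_iff = fixed_vecs_intertwiner_iff[where \<sigma> = \<sigma> and \<tau> = \<tau> and H = H,
      OF B unitary_rep_carrier[OF \<sigma>] unitary_rep_carrier[OF \<tau>] intertwine]
  obtain x where x: "x \<in> carrier_vec r" "w = B *\<^sub>v x" using w(1) range by blast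
  have "\<sigma> g *\<^sub>v w = B *\<^sub>v (\<tau> g *\<^sub>v x)"
    using x assoc_mult_mat_vec[OF unitary_rep_carrier[OF \<sigma>] B(1) x(1)]
      assoc_mult_mat_vec[OF B(1) unitary_rep_carrier[OF \<tau>] x(1)] intertwine by simp
  then have "\<tau> g *\<^sub>v x \<notin> fixed_vecs r \<tau> H"
    using fixed_iff[OF mult_mat_vec_carrier[OF unitary_rep_carrier[OF \<tau>] x(1)]] w(3) by simp
  moreover have "x \<in> fixed_vecs r \<tau> H" using fixed_iff[OF x(1)] w(2) x(2) by simp
  ultimately show ?thesis using r \<tau> by blast
qed

lemma invariant_subspace_kernel_adjoint:
  assumes \<sigma>: "\<And>g. \<sigma> g \<in> carrier_mat m m" and \<tau>: "\<And>g. \<tau> g \<in> carrier_mat r r"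
    and B: "B \<in> carrier_mat m r" and intertwine: "\<And>g. mat_adjoint B * \<sigma> g = \<tau> g * mat_adjoint B"
  shows "invariant_subspace m \<sigma> {x \<in> carrier_vec m. mat_adjoint B *\<^sub>v x = 0\<^sub>v r}"
  unfolding invariant_subspace_def
proof (intro conjI ballI allI)
  define A where "A = mat_adjoint B"
  have A: "A \<in> carrier_mat r m" unfolding A_def using B by simp
  let ?K = "{x \<in> carrier_vec m. mat_adjoint B *\<^sub>v x = 0\<^sub>v r}"
  show "?K \<subseteq> carrier_vec m" "0\<^sub>v m \<in> ?K" using A unfolding A_def by auto
  show "x + y \<in> ?K" if "x \<in> ?K" "y \<in> ?K" for x y
    using that mult_add_distrib_mat_vec[OF A] unfolding A_def by simp
  show "a \<cdot>\<^sub>v x \<in> ?K" if "x \<in> ?K" for a x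
    using that mult_mat_vec[OF A] unfolding A_def by simp
  show "\<sigma> k *\<^sub>v x \<in> ?K" if x: "x \<in> ?K" for k x
  proof -
    have "A *\<^sub>v (\<sigma> k *\<^sub>v x) = (A * \<sigma> k) *\<^sub>v x" using assoc_mult_mat_vec[OF A \<sigma>] x by simp
    also have "\<dots> = \<tau> k *\<^sub>v (A *\<^sub>v x)"
      using intertwine[of k] assoc_mult_mat_vec[OF \<tau> A] x unfolding A_def by simp
    finally show ?thesis using x \<tau> mult_mat_vec_carrier[OF \<sigma>] unfolding A_def by simp
  qed
qed

lemma fixed_vecs_projection:
  assumes \<sigma>: "\<And>g. \<sigma> g \<in> carrier_mat m m" and \<tau>: "\<And>g. \<tau> g \<in> carrier_mat r r"
    and B: "B \<in> carrier_mat m r"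
    and intertwine: "\<And>g. \<sigma> g * B = B * \<tau> g" "\<And>g. mat_adjoint B * \<sigma> g = \<tau> g * mat_adjoint B"
    and v: "v \<in> fixed_vecs m \<sigma> H"
  shows "B *\<^sub>v (mat_adjoint B *\<^sub>v v) \<in> fixed_vecs m \<sigma> H"
proof -
  define A where "A = mat_adjoint B"
  have A: "A \<in> carrier_mat r m" unfolding A_def using B by simp
  have v_carrier: "v \<in> carrier_vec m" using v unfolding fixed_vecs_def by simp
  have "\<sigma> h *\<^sub>v (B *\<^sub>v (A *\<^sub>v v)) = B *\<^sub>v (A *\<^sub>v (\<sigma> h *\<^sub>v v))" for h
  proof -
    have "\<sigma> h *\<^sub>v (B *\<^sub>v (A *\<^sub>v v)) = B *\<^sub>v (\<tau> h *\<^sub>v (A *\<^sub>v v))"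
      using assoc_mult_mat_vec[OF \<sigma> B] assoc_mult_mat_vec[OF B \<tau>] intertwine(1) A v_carrier by simp
    also have "\<tau> h *\<^sub>v (A *\<^sub>v v) = A *\<^sub>v (\<sigma> h *\<^sub>v v)"
      using assoc_mult_mat_vec[OF \<tau> A v_carrier] assoc_mult_mat_vec[OF A \<sigma> v_carrier] intertwine(2)
      unfolding A_def by simp
    finally show ?thesis .
  qed
  moreover have "B *\<^sub>v (A *\<^sub>v v) \<in> carrier_vec m" using A B v_carrier by simp
  ultimately show ?thesis using v unfolding fixed_vecs_def A_def by simp
qed

lemma moved_fixed_vec_in_smaller_rep:
  fixes \<sigma> :: "'g::{group_add, topological_space} \<Rightarrow> complex mat"
  assumes \<sigma>: "unitary_rep m \<sigma>" and W: "invariant_subspace m \<sigma> W" "W \<noteq> {0\<^sub>v m}" "W \<noteq> carrier_vec m"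
    and v: "v \<in> fixed_vecs m \<sigma> H" "\<sigma> g *\<^sub>v v \<notin> fixed_vecs m \<sigma> H"
  shows "\<exists>r<m. \<exists>\<tau> x. unitary_rep r \<tau> \<and> x \<in> fixed_vecs r \<tau> H \<and> \<tau> g *\<^sub>v x \<notin> fixed_vecs r \<tau> H"
proof -
  obtain r B \<tau> where B: "B \<in> carrier_mat m r" "mat_adjoint B * B = 1\<^sub>m r"
    and range: "W = (\<lambda>x. B *\<^sub>v x) ` carrier_vec r" and \<tau>: "unitary_rep r \<tau>"
    and intertwine: "\<And>g. \<sigma> g * B = B * \<tau> g"
    and intertwine': "\<And>g. mat_adjoint B * \<sigma> g = \<tau> g * mat_adjoint B"
    using subrep_of_invariant_subspace[OF \<sigma> W(1,3)] by metis
  define A where "A = mat_adjoint B"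
  note c = unitary_rep_carrier[OF \<sigma>] and c\<tau> = unitary_rep_carrier[OF \<tau>]
  have A: "A \<in> carrier_mat r m" unfolding A_def using B by simp
  have v_carrier: "v \<in> carrier_vec m" using v unfolding fixed_vecs_def by simp
  \<comment> \<open>v splits into H-fixed parts in W and in its orthogonal complement W', which is invariant too.\<close>
  define W' where "W' = {x \<in> carrier_vec m. A *\<^sub>v x = 0\<^sub>v r}"
  have W': "invariant_subspace m \<sigma> W'"
    unfolding W'_def A_def by (rule invariant_subspace_kernel_adjoint[OF c c\<tau> B(1) intertwine'])
  have "W' \<noteq> carrier_vec m"
  proof
    assume W'_full: "W' = carrier_vec m"
    have "0\<^sub>v m \<in> W" using W(1) unfolding invariant_subspace_def by blast
    then obtain w where "w \<in> W" "w \<noteq> 0\<^sub>v m" using W(2) by blast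
    then obtain x where x: "x \<in> carrier_vec r" "B *\<^sub>v x \<noteq> 0\<^sub>v m" using range by blast
    then have "B *\<^sub>v x \<in> W'" using W'_full mult_mat_vec_carrier[OF B(1) x(1)] by simp
    then have "A *\<^sub>v (B *\<^sub>v x) = 0\<^sub>v r" unfolding W'_def by simp
    then show False using x B assoc_mult_mat_vec[OF A B(1) x(1)] unfolding A_def by simp
  qed
  define w1 where "w1 = B *\<^sub>v (A *\<^sub>v v)"
  define w2 where "w2 = v - w1"
  have w1_carrier: "w1 \<in> carrier_vec m" unfolding w1_def using A B(1) v_carrier by simp
  have w2_carrier: "w2 \<in> carrier_vec m" unfolding w2_def using v_carrier w1_carrier by simp
  have w1: "w1 \<in> W" unfolding w1_def range using A v_carrier by simp
  have "A *\<^sub>v w1 = A *\<^sub>v v"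
    unfolding w1_def using assoc_mult_mat_vec[OF A B(1), of "A *\<^sub>v v"] A v_carrier B(2)
    unfolding A_def by simp
  then have w2: "w2 \<in> W'"
    unfolding W'_def w2_def using mult_minus_distrib_mat_vec[OF A v_carrier w1_carrier] v_carrier
      w1_carrier A by simp
  have w1_fixed: "w1 \<in> fixed_vecs m \<sigma> H"
    unfolding w1_def A_def by (rule fixed_vecs_projection[OF c c\<tau> B(1) intertwine intertwine' v(1)])
  have w2_fixed: "w2 \<in> fixed_vecs m \<sigma> H"
    unfolding w2_def by (rule fixed_vecs_minus[where \<sigma> = \<sigma>, OF c v(1) w1_fixed])
  have "v = w1 + w2" unfolding w2_def using v_carrier w1_carrier by (intro eq_vecI) auto
  then have "\<sigma> g *\<^sub>v v = \<sigma> g *\<^sub>v w1 + \<sigma> g *\<^sub>v w2"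
    using mult_add_distrib_mat_vec[OF c w1_carrier w2_carrier] by simp
  then consider "\<sigma> g *\<^sub>v w1 \<notin> fixed_vecs m \<sigma> H" | "\<sigma> g *\<^sub>v w2 \<notin> fixed_vecs m \<sigma> H"
    using v(2) fixed_vecs_add[where \<sigma> = \<sigma>, OF c] by metis
  then show ?thesis
  proof cases
    case 1
    then show ?thesis using moved_fixed_vec_in_subrep[OF \<sigma> W(1,3) w1 w1_fixed] by blast
  next
    case 2
    then show ?thesis
      using moved_fixed_vec_in_subrep[OF \<sigma> W' \<open>W' \<noteq> carrier_vec m\<close> w2 w2_fixed] by blast
  qed
qed

lemma moved_fixed_vec_in_irreducible_rep:
  fixes \<sigma> :: "'g::{group_add, topological_space} \<Rightarrow> complex mat"
  assumes "unitary_rep m \<sigma>" "v \<in> fixed_vecs m \<sigma> H" "\<sigma> g *\<^sub>v v \<notin> fixed_vecs m \<sigma> H"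
  shows "\<exists>r \<tau> x. irreducible_unitary_rep r \<tau> \<and> x \<in> fixed_vecs r \<tau> H \<and> \<tau> g *\<^sub>v x \<notin> fixed_vecs r \<tau> H"
  using assms
proof (induction m arbitrary: \<sigma> v rule: less_induct)
  case (less m)
  show ?case
  proof (cases "irreducible_unitary_rep m \<sigma>")
    case True
    then show ?thesis using less.prems by blast
  next
    case False
    have "m > 0"
    proof (rule ccontr)
      assume "\<not> m > 0"
      then have "fixed_vecs m \<sigma> H \<subseteq> {0\<^sub>v m}" unfolding fixed_vecs_def by auto
      then have "fixed_vecs m \<sigma> H = {0\<^sub>v m}" using less.prems(2) by blast
      then show False using fixed_vecs_proper_if_moved(1)[OF less.prems] by blast
    qed
    then obtain W where "invariant_subspace m \<sigma> W" "W \<noteq> {0\<^sub>v m}" "W \<noteq> carrier_vec m"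
      using False less.prems(1) unfolding irreducible_unitary_rep_def by blast
    then obtain r \<tau> x where "r < m" "unitary_rep r \<tau>" "x \<in> fixed_vecs r \<tau> H"
      "\<tau> g *\<^sub>v x \<notin> fixed_vecs r \<tau> H"
      using moved_fixed_vec_in_smaller_rep[OF less.prems(1) _ _ _ less.prems(2,3)] by blast
    then show ?thesis using less.IH by blast
  qed
qed

definition translate :: "'g::group_add \<Rightarrow> 'g set \<Rightarrow> 'g set" where
  "translate g C = (\<lambda>x. g + x) ` C"

lemma translate_translate: "translate g (translate g' C) = translate (g + g') C"
  unfolding translate_def image_image by (simp add: add.assoc)

lemma translate_zero [simp]: "translate 0 C = C"
  unfolding translate_def by simp

lemma translate_eq_iff: "translate g C = D \<longleftrightarrow> C = translate (- g) D"
  using translate_translate[of "- g" g C] translate_translate[of g "- g" D] by auto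

lemma translate_eq_vimage: "translate g A = (\<lambda>x. - g + x) -` A"
proof (auto simp: translate_def image_def)
  fix y assume "- g + y \<in> A"
  then show "\<exists>x\<in>A. y = g + x" by (intro bexI[of _ "- g + y"]) (auto simp: add.assoc[symmetric])
qed

lemma translate_in_left_cosets:
  assumes "C \<in> left_cosets H"
  shows "translate g C \<in> left_cosets H"
proof -
  obtain a where "C = translate a H" using assms unfolding left_cosets_def translate_def by auto
  then have "translate g C = translate (g + a) H" by (simp add: translate_translate)
  then show ?thesis unfolding left_cosets_def translate_def by blast
qed

lemma self_in_left_cosets: "H \<in> left_cosets H"
  unfolding left_cosets_def by (auto intro!: exI[of _ 0])

lemma left_cosets_eq: "left_cosets H = {translate g H | g. True}"
  unfolding left_cosets_def translate_def ..

section \<open>Haar measure and a closed subgroup of finite index\<close>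

locale haar_finite_index_subgroup =
  fixes \<mu> :: "'g::{group_add, t2_space} measure" and H :: "'g set"
  assumes compact_group: "compact_group TYPE('g)"
    and haar: "normalized_haar \<mu>"
    and subgroup: "is_subgroup H" and closed_H: "closed H"
    and finite_index: "finite (left_cosets H)"
begin

lemma prob_space_haar: "prob_space \<mu>"
  using haar unfolding normalized_haar_def by auto

lemma sets_eq_borel: "sets \<mu> = sets borel"
  using haar unfolding normalized_haar_def by auto

lemma space_eq_UNIV [simp]: "space \<mu> = UNIV"
  using sets_eq_imp_space_eq[OF sets_eq_borel] by simp

lemma emeasure_translate: "A \<in> sets borel \<Longrightarrow> emeasure \<mu> (translate g A) = emeasure \<mu> A"
  using haar unfolding normalized_haar_def translate_def by auto

lemma finite_measure_haar: "finite_measure \<mu>"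
  using prob_space_haar by (simp add: prob_space_def)

lemma zero_mem: "0 \<in> H" and add_mem: "x \<in> H \<Longrightarrow> y \<in> H \<Longrightarrow> x + y \<in> H"
  and minus_mem: "x \<in> H \<Longrightarrow> - x \<in> H"
  using subgroup unfolding is_subgroup_def by auto

lemma add_left_mem_iff: "h \<in> H \<Longrightarrow> h + x \<in> H \<longleftrightarrow> x \<in> H"
  by (metis add_mem minus_mem add_minus_cancel)

lemma translate_eq_translate_iff: "translate a H = translate b H \<longleftrightarrow> - b + a \<in> H"
proof
  assume "translate a H = translate b H"
  moreover have "a \<in> translate a H" unfolding translate_def using zero_mem by force
  ultimately obtain h where "h \<in> H" "a = b + h" unfolding translate_def by auto
  then show "- b + a \<in> H" by (simp add: add.assoc[symmetric])
next
  assume ba: "- b + a \<in> H"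
  have "translate (- b + a) H = H"
    unfolding translate_def using add_left_mem_iff[OF ba] add_left_mem_iff[OF minus_mem[OF ba]]
    by (force simp: add.assoc[symmetric])
  then show "translate a H = translate b H"
    using translate_translate[of b "- b + a" H] by (simp add: add.assoc[symmetric])
qed

lemma translate_mem_H: "k \<in> H \<Longrightarrow> translate k H = H"
  using translate_eq_translate_iff[of k 0] by simp

lemma continuous_on_add_fun:
  fixes f g :: "'a::topological_space \<Rightarrow> 'g"
  assumes "continuous_on UNIV f" "continuous_on UNIV g"
  shows "continuous_on UNIV (\<lambda>x. f x + g x)"
proof -
  have "continuous_on UNIV (\<lambda>p::'g \<times> 'g. fst p + snd p)"
    using compact_group unfolding compact_group_def by auto
  moreover have "continuous_on UNIV (\<lambda>x. (f x, g x))" using assms by (intro continuous_on_Pair)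
  ultimately show ?thesis using continuous_on_compose2 by fastforce
qed

lemma continuous_on_translate: "continuous_on UNIV (\<lambda>x::'g. g + x)"
  by (intro continuous_on_add_fun continuous_on_const continuous_on_id)

lemma closed_translate: "closed A \<Longrightarrow> closed (translate g (A :: 'g set))"
  unfolding translate_eq_vimage
  using continuous_on_translate[of "- g"]
  by (simp add: closed_vimage continuous_on_eq_continuous_at)

lemma borel_measurable_continuous: "continuous_on UNIV f \<Longrightarrow> f \<in> borel_measurable \<mu>"
  using borel_measurable_continuous_onI measurable_cong_sets[OF sets_eq_borel refl] by blast

lemma integral_translate:
  fixes f :: "'g \<Rightarrow> 'b::{banach, second_countable_topology}"
  assumes "f \<in> borel_measurable \<mu>"
  shows "(LINT x|\<mu>. f (g + x)) = (LINT x|\<mu>. f x)"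
proof -
  have translate: "(\<lambda>x. g + x) \<in> measurable \<mu> \<mu>"
    using borel_measurable_continuous[OF continuous_on_translate]
    unfolding measurable_cong_sets[OF refl sets_eq_borel] .
  have "distr \<mu> \<mu> (\<lambda>x. g + x) = \<mu>"
  proof (rule measure_eqI)
    fix A assume "A \<in> sets (distr \<mu> \<mu> (\<lambda>x. g + x))"
    then have A: "A \<in> sets \<mu>" by simp
    have "emeasure (distr \<mu> \<mu> (\<lambda>x. g + x)) A = emeasure \<mu> ((\<lambda>x. g + x) -` A \<inter> space \<mu>)"
      by (rule emeasure_distr[OF translate A])
    also have "(\<lambda>x. g + x) -` A \<inter> space \<mu> = translate (- g) A"
      using translate_eq_vimage[of "- g" A] by simp
    also have "emeasure \<mu> (translate (- g) A) = emeasure \<mu> A"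
      using A unfolding sets_eq_borel by (rule emeasure_translate)
    finally show "emeasure (distr \<mu> \<mu> (\<lambda>x. g + x)) A = emeasure \<mu> A" .
  qed simp
  then show ?thesis using integral_distr[OF translate assms] by simp
qed

lemma H_in_sets: "H \<in> sets \<mu>"
  using closed_H sets_eq_borel by (simp add: borel_closed)

lemma integrable_indicator_mult:
  fixes f :: "'g \<Rightarrow> complex"
  assumes f: "continuous_on UNIV f"
  shows "integrable \<mu> (\<lambda>x. indicator H x * f x)"
proof -
  have "compact (range f)"
    using compact_continuous_image[OF f] compact_group unfolding compact_group_def by auto
  then have "bounded (range f)" by (rule compact_imp_bounded)
  then obtain B where "\<forall>y\<in>range f. norm y \<le> B" unfolding bounded_iff by blast
  then have B: "norm (f x) \<le> B" for x by simp
  have "norm (indicator H x * f x) \<le> B" for x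
    using B[of x] order_trans[OF norm_ge_zero B[of x]] by (cases "x \<in> H") simp_all
  moreover have "(\<lambda>x. indicator H x * f x) \<in> borel_measurable \<mu>"
    using H_in_sets borel_measurable_continuous[OF f] by (intro borel_measurable_times) auto
  ultimately show ?thesis
    by (intro finite_measure.integrable_const_bound[OF finite_measure_haar]) auto
qed

lemma integral_indicator_mult_const:
  "(LINT x|\<mu>. indicator H x * c) = complex_of_real (measure \<mu> H) * (c :: complex)"
proof -
  have "(LINT x|\<mu>. (indicator H x :: complex)) = (LINT x|\<mu>. complex_of_real (indicator H x))"
    by (simp only: of_real_indicator)
  also have "\<dots> = complex_of_real (measure \<mu> H)"
    unfolding integral_complex_of_real using H_in_sets finite_measure_haar
    by (simp add: finite_measure.emeasure_finite)
  finally show ?thesis by (simp add: integral_mult_left_zero)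
qed

lemma measure_H_pos: "measure \<mu> H > 0"
proof -
  have "(\<Union>C\<in>left_cosets H. C) = UNIV"
    unfolding left_cosets_eq translate_def using zero_mem by force
  then have "1 = measure \<mu> (\<Union>C\<in>left_cosets H. C)"
    using prob_space.prob_space[OF prob_space_haar] by simp
  also have "\<dots> \<le> (\<Sum>C\<in>left_cosets H. measure \<mu> C)"
    using finite_index closed_translate[OF closed_H] sets_eq_borel
    by (intro finite_measure.finite_measure_subadditive_finite[OF finite_measure_haar])
      (auto simp: left_cosets_eq borel_closed)
  also have "\<dots> = (\<Sum>C\<in>left_cosets H. measure \<mu> H)"
    using emeasure_translate closed_H
    by (intro sum.cong refl) (auto simp: left_cosets_eq measure_def borel_closed)
  finally have "1 \<le> card (left_cosets H) * measure \<mu> H" by simp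
  then have "measure \<mu> H \<noteq> 0" by auto
  then show ?thesis using measure_nonneg[of \<mu> H] by (simp add: order_less_le)
qed

section \<open>The Fourier coefficient of the indicator of H\<close>

abbreviation fourier_indicator :: "nat \<Rightarrow> ('g \<Rightarrow> complex mat) \<Rightarrow> complex mat" where
  "fourier_indicator n \<rho> \<equiv> fourier \<mu> (indicator H) n \<rho>"

lemma fourier_indicator_carrier: "fourier_indicator n \<rho> \<in> carrier_mat n n"
  unfolding fourier_def by simp

lemma unitary_rep_minus_mult_vec_index:
  assumes \<rho>: "unitary_rep n \<rho>" and x: "x \<in> carrier_vec n" and i: "i < n"
  shows "(\<rho> (- z) *\<^sub>v x) $ i = (\<Sum>j\<in>{0..<n}. cnj (\<rho> z $$ (j, i)) * x $ j)"
  using unitary_rep_mat_adjoint[OF \<rho>, of z, symmetric] i x unitary_rep_carrier[OF \<rho>, of z]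
  by (simp add: scalar_prod_def)

lemma continuous_on_unitary_rep_minus_mult_vec:
  assumes \<rho>: "unitary_rep n \<rho>" and x: "x \<in> carrier_vec n" and i: "i < n"
  shows "continuous_on UNIV (\<lambda>z. (\<rho> (- z) *\<^sub>v x) $ i)"
  unfolding unitary_rep_minus_mult_vec_index[OF assms] using unitary_rep_continuous[OF \<rho> _ i]
  by (intro continuous_on_sum continuous_on_mult continuous_on_cnj continuous_on_const) auto

lemma fourier_indicator_mult_vec_index:
  assumes \<rho>: "unitary_rep n \<rho>" and x: "x \<in> carrier_vec n" and i: "i < n"
  shows "(fourier_indicator n \<rho> *\<^sub>v x) $ i = (LINT z|\<mu>. indicator H z * (\<rho> (- z) *\<^sub>v x) $ i)"
proof -
  have "continuous_on UNIV (\<lambda>z. cnj (\<rho> z $$ (j, i)) * x $ j)" if "j < n" for j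
    using unitary_rep_continuous[OF \<rho> that i]
    by (intro continuous_on_mult continuous_on_cnj continuous_on_const)
  note integrable = integrable_indicator_mult[OF this]
  have "(fourier_indicator n \<rho> *\<^sub>v x) $ i
      = (\<Sum>j\<in>{0..<n}. (LINT z|\<mu>. indicator H z * cnj (\<rho> z $$ (j, i))) * x $ j)"
    using i x by (simp add: fourier_def scalar_prod_def)
  also have "\<dots> = (\<Sum>j\<in>{0..<n}. LINT z|\<mu>. indicator H z * (cnj (\<rho> z $$ (j, i)) * x $ j))"
    by (simp add: integral_mult_left_zero[symmetric] mult.assoc)
  also have "\<dots> = (LINT z|\<mu>. (\<Sum>j\<in>{0..<n}. indicator H z * (cnj (\<rho> z $$ (j, i)) * x $ j)))"
    by (rule Bochner_Integration.integral_sum[symmetric]) (use integrable in simp)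
  also have "\<dots> = (LINT z|\<mu>. indicator H z * (\<rho> (- z) *\<^sub>v x) $ i)"
    by (simp add: unitary_rep_minus_mult_vec_index[OF assms] sum_distrib_left)
  finally show ?thesis .
qed

lemma fourier_indicator_fixed:
  assumes \<rho>: "unitary_rep n \<rho>" and x: "x \<in> fixed_vecs n \<rho> H"
  shows "fourier_indicator n \<rho> *\<^sub>v x = complex_of_real (measure \<mu> H) \<cdot>\<^sub>v x"
proof (rule eq_vecI)
  have x_carrier: "x \<in> carrier_vec n" using x unfolding fixed_vecs_def by simp
  fix i assume "i < dim_vec (complex_of_real (measure \<mu> H) \<cdot>\<^sub>v x)"
  then have i: "i < n" using x_carrier by simp
  have fixed: "indicator H z * (\<rho> (- z) *\<^sub>v x) $ i = indicator H z * x $ i" for z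
    using x minus_mem unfolding fixed_vecs_def by (cases "z \<in> H") simp_all
  have "(fourier_indicator n \<rho> *\<^sub>v x) $ i = (LINT z|\<mu>. indicator H z * x $ i)"
    unfolding fourier_indicator_mult_vec_index[OF \<rho> x_carrier i]
    by (rule Bochner_Integration.integral_cong) (simp_all only: fixed)
  also have "\<dots> = complex_of_real (measure \<mu> H) * x $ i" by (rule integral_indicator_mult_const)
  finally show "(fourier_indicator n \<rho> *\<^sub>v x) $ i = (complex_of_real (measure \<mu> H) \<cdot>\<^sub>v x) $ i"
    using i x_carrier by simp
qed (use x in \<open>auto simp: fixed_vecs_def fourier_def\<close>)

lemma fourier_indicator_mult_right:
  assumes \<rho>: "unitary_rep n \<rho>" and h: "h \<in> H"
  shows "fourier_indicator n \<rho> * \<rho> h = fourier_indicator n \<rho>"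
proof (rule eq_mat_on_vecI)
  note c = unitary_rep_carrier[OF \<rho>]
  show "fourier_indicator n \<rho> * \<rho> h \<in> carrier_mat n n" "fourier_indicator n \<rho> \<in> carrier_mat n n"
    using mult_carrier_mat[OF fourier_indicator_carrier c] fourier_indicator_carrier by auto
  fix y :: "complex vec" assume y: "y \<in> carrier_vec n"
  show "(fourier_indicator n \<rho> * \<rho> h) *\<^sub>v y = fourier_indicator n \<rho> *\<^sub>v y"
  proof (rule eq_vecI)
    fix i assume "i < dim_vec (fourier_indicator n \<rho> *\<^sub>v y)"
    then have i: "i < n" by (simp add: fourier_def)
    define \<phi> where "\<phi> z = indicator H z * (\<rho> (- z) *\<^sub>v y) $ i" for z
    have "\<phi> \<in> borel_measurable \<mu>"
      unfolding \<phi>_def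
      by (rule borel_measurable_integrable[OF
          integrable_indicator_mult[OF continuous_on_unitary_rep_minus_mult_vec[OF \<rho> y i]]])
    moreover have "indicator H z * (\<rho> (- z) *\<^sub>v (\<rho> h *\<^sub>v y)) $ i = \<phi> (- h + z)" for z
    proof -
      have "\<rho> (- z) *\<^sub>v (\<rho> h *\<^sub>v y) = \<rho> (- (- h + z)) *\<^sub>v y"
        using assoc_mult_mat_vec[OF c c y] unitary_rep_add[OF \<rho>] by (simp add: minus_add)
      moreover have "indicator H z = (indicator H (- h + z) :: complex)"
        using add_left_mem_iff[OF minus_mem[OF h]] by (simp add: indicator_def)
      ultimately show ?thesis unfolding \<phi>_def by simp
    qed
    ultimately have "(LINT z|\<mu>. indicator H z * (\<rho> (- z) *\<^sub>v (\<rho> h *\<^sub>v y)) $ i) = (LINT z|\<mu>. \<phi> z)"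
      using integral_translate[of \<phi> "- h"] by simp
    then show "((fourier_indicator n \<rho> * \<rho> h) *\<^sub>v y) $ i = (fourier_indicator n \<rho> *\<^sub>v y) $ i"
      using fourier_indicator_mult_vec_index[OF \<rho> mult_mat_vec_carrier[OF c y] i]
        fourier_indicator_mult_vec_index[OF \<rho> y i]
        assoc_mult_mat_vec[OF fourier_indicator_carrier c y]
      unfolding \<phi>_def by simp
  qed (simp add: fourier_def)
qed

text \<open>Since hat(chi_H)(rho) rho(h) = hat(chi_H)(rho) for h in H, the columns of its adjoint are H-fixed.\<close>
lemma fourier_indicator_eq_0:
  assumes \<rho>: "unitary_rep n \<rho>" and trivial: "fixed_vecs n \<rho> H = {0\<^sub>v n}"
  shows "fourier_indicator n \<rho> = 0\<^sub>m n n"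
proof -
  note c = unitary_rep_carrier[OF \<rho>]
  define A where "A = mat_adjoint (fourier_indicator n \<rho>)"
  have A: "A \<in> carrier_mat n n" unfolding A_def using fourier_indicator_carrier by simp
  have "\<rho> h * A = A" if h: "h \<in> H" for h
    using arg_cong[OF fourier_indicator_mult_right[OF \<rho> minus_mem[OF h]], of mat_adjoint]
      mat_adjoint_mult[OF fourier_indicator_carrier c] unitary_rep_mat_adjoint[OF \<rho>, of "- h"]
    unfolding A_def by simp
  then have "\<rho> h *\<^sub>v col A j = col A j" if "h \<in> H" "j < n" for h j
    using col_mult2[OF c A that(2), of h] that(1) by simp
  then have "col A j \<in> fixed_vecs n \<rho> H" if "j < n" for j
    using A that unfolding fixed_vecs_def by simp
  then have "A = 0\<^sub>m n n" using trivial A by (intro mat_col_eqI) auto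
  then show ?thesis unfolding A_def by (metis mat_adjoint_mat_adjoint mat_adjoint_zero)
qed

lemma rank_fourier_indicator_eq_0_iff:
  assumes \<rho>: "unitary_rep n \<rho>"
  shows "mat_rank (fourier_indicator n \<rho>) = 0 \<longleftrightarrow> fixed_vecs n \<rho> H = {0\<^sub>v n}"
proof
  assume rank: "mat_rank (fourier_indicator n \<rho>) = 0"
  show "fixed_vecs n \<rho> H = {0\<^sub>v n}"
  proof (intro equalityI subsetI)
    fix v assume v: "v \<in> fixed_vecs n \<rho> H"
    then have v_carrier: "v \<in> carrier_vec n" unfolding fixed_vecs_def by simp
    show "v \<in> {0\<^sub>v n}"
    proof (rule ccontr)
      assume "v \<notin> {0\<^sub>v n}"
      then obtain i where i: "i < n" "v $ i \<noteq> 0" using v_carrier by (auto simp: vec_eq_iff)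
      then have "(fourier_indicator n \<rho> *\<^sub>v v) $ i \<noteq> 0"
        using fourier_indicator_fixed[OF \<rho> v] measure_H_pos v_carrier by simp
      then have "fourier_indicator n \<rho> *\<^sub>v v \<noteq> 0\<^sub>v n" using i by auto
      then show False
        using mat_rank_nonzero_if_mult_vec_nonzero[OF fourier_indicator_carrier[of n \<rho>] v_carrier]
          rank
        by simp
    qed
  qed (use unitary_rep_carrier[OF \<rho>] in \<open>simp add: fixed_vecs_def\<close>)
next
  assume "fixed_vecs n \<rho> H = {0\<^sub>v n}"
  then show "mat_rank (fourier_indicator n \<rho>) = 0"
    using fourier_indicator_eq_0[OF \<rho>] mat_rank_zero_mat by simp
qed

lemma rank_fourier_indicator_eq_dim_iff:
  assumes \<rho>: "unitary_rep n \<rho>"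
  shows "mat_rank (fourier_indicator n \<rho>) = n \<longleftrightarrow> fixed_vecs n \<rho> H = carrier_vec n"
proof
  note c = unitary_rep_carrier[OF \<rho>]
  assume rank: "mat_rank (fourier_indicator n \<rho>) = n"
  have "\<rho> h *\<^sub>v y = y" if "y \<in> carrier_vec n" "h \<in> H" for y h
  proof (rule mat_rank_full_imp_inj[OF fourier_indicator_carrier rank
        mult_mat_vec_carrier[OF c] that(1)])
    show "fourier_indicator n \<rho> *\<^sub>v (\<rho> h *\<^sub>v y) = fourier_indicator n \<rho> *\<^sub>v y"
      using assoc_mult_mat_vec[OF fourier_indicator_carrier[of n \<rho>] c[of h] that(1)]
        fourier_indicator_mult_right[OF \<rho> that(2)] by simp
  qed fact
  then show "fixed_vecs n \<rho> H = carrier_vec n" unfolding fixed_vecs_def by auto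
next
  assume full: "fixed_vecs n \<rho> H = carrier_vec n"
  have "fourier_indicator n \<rho> = complex_of_real (measure \<mu> H) \<cdot>\<^sub>m 1\<^sub>m n"
    by (rule eq_mat_on_vecI[OF fourier_indicator_carrier])
      (use fourier_indicator_fixed[OF \<rho>] full in auto)
  then show "mat_rank (fourier_indicator n \<rho>) = n"
    using mat_rank_smult_one_mat measure_H_pos by simp
qed

section \<open>The permutation representation on the cosets of H\<close>

text \<open>A closed subgroup of finite index is open: its complement is a finite union of closed cosets.\<close>
lemma closed_Compl_H: "closed (- H)"
proof -
  have "- H = \<Union> {C \<in> left_cosets H. C \<noteq> H}"
  proof (intro equalityI subsetI)
    fix x assume x: "x \<in> - H"
    have "x \<in> translate x H" unfolding translate_def using zero_mem by force
    moreover have "translate x H \<noteq> H" using calculation x by auto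
    ultimately show "x \<in> \<Union> {C \<in> left_cosets H. C \<noteq> H}" unfolding left_cosets_eq by blast
  next
    fix x assume "x \<in> \<Union> {C \<in> left_cosets H. C \<noteq> H}"
    then obtain a where a: "translate a H \<noteq> H" "x \<in> translate a H" unfolding left_cosets_eq by auto
    then obtain h where h: "h \<in> H" "x = a + h" unfolding translate_def by auto
    show "x \<in> - H"
    proof
      assume "x \<in> H"
      moreover have "a = x + - h" using h(2) by (simp add: add.assoc)
      ultimately have "a \<in> H" using add_mem minus_mem h(1) by metis
      then show False using a(1) translate_mem_H by simp
    qed
  qed
  moreover have "closed (\<Union> {C \<in> left_cosets H. C \<noteq> H})"
    using finite_index closed_translate[OF closed_H]
    by (intro closed_Union) (auto simp: left_cosets_eq)
  ultimately show ?thesis by simp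
qed

lemma continuous_on_coset_indicator:
  "continuous_on UNIV (\<lambda>g. if translate g (translate a H) = translate b H then (1::complex) else 0)"
proof -
  define \<phi> where "\<phi> g = - b + g + a" for g
  have \<phi>: "continuous_on UNIV \<phi>"
    unfolding \<phi>_def by (intro continuous_on_add_fun continuous_on_const continuous_on_id)
  have "closed (\<phi> -` H)" "closed (- (\<phi> -` H))"
    using \<phi> closed_H closed_Compl_H
    by (simp_all add: closed_vimage continuous_on_eq_continuous_at vimage_Compl[symmetric])
  then have "continuous_on (\<phi> -` H \<union> - (\<phi> -` H)) (\<lambda>g. if g \<in> \<phi> -` H then (1::complex) else 0)"
    by (intro continuous_on_cases continuous_on_const) auto
  moreover have "translate g (translate a H) = translate b H \<longleftrightarrow> g \<in> \<phi> -` H" for g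
    unfolding translate_translate translate_eq_translate_iff \<phi>_def by (simp add: add.assoc)
  ultimately show ?thesis by simp
qed

definition subgroup_index :: nat where
  "subgroup_index = card (left_cosets H)"

definition coset_enum :: "nat \<Rightarrow> 'g set" where
  "coset_enum = (SOME e. bij_betw e {0..<subgroup_index} (left_cosets H))"

definition coset_num :: "'g set \<Rightarrow> nat" where
  "coset_num = inv_into {0..<subgroup_index} coset_enum"

definition coset_rep :: "'g \<Rightarrow> complex mat" where
  "coset_rep g = mat subgroup_index subgroup_index
     (\<lambda>(i, j). if translate g (coset_enum j) = coset_enum i then 1 else 0)"

lemma bij_betw_coset_enum: "bij_betw coset_enum {0..<subgroup_index} (left_cosets H)"
  unfolding coset_enum_def subgroup_index_def
  using someI_ex[OF ex_bij_betw_nat_finite[OF finite_index]] by simp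

lemma coset_enum_in: "i < subgroup_index \<Longrightarrow> coset_enum i \<in> left_cosets H"
  using bij_betw_coset_enum unfolding bij_betw_def by auto

lemma coset_num_less: "C \<in> left_cosets H \<Longrightarrow> coset_num C < subgroup_index"
  unfolding coset_num_def using bij_betw_coset_enum
  by (metis atLeastLessThan_iff bij_betw_def inv_into_into)

lemma coset_enum_coset_num: "C \<in> left_cosets H \<Longrightarrow> coset_enum (coset_num C) = C"
  unfolding coset_num_def using bij_betw_coset_enum by (metis bij_betw_def f_inv_into_f)

lemma coset_num_enum: "i < subgroup_index \<Longrightarrow> coset_num (coset_enum i) = i"
  unfolding coset_num_def using bij_betw_coset_enum by (simp add: bij_betw_def inv_into_f_f)

lemma coset_rep_carrier: "coset_rep g \<in> carrier_mat subgroup_index subgroup_index"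
  unfolding coset_rep_def by simp

lemma dim_coset_rep [simp]:
  "dim_row (coset_rep g) = subgroup_index" "dim_col (coset_rep g) = subgroup_index"
  unfolding coset_rep_def by simp_all

lemma col_coset_rep:
  assumes j: "j < subgroup_index"
  shows "col (coset_rep g) j = unit_vec subgroup_index (coset_num (translate g (coset_enum j)))"
proof -
  have C: "translate g (coset_enum j) \<in> left_cosets H"
    using translate_in_left_cosets coset_enum_in j by blast
  have "coset_enum i = translate g (coset_enum j) \<longleftrightarrow> i = coset_num (translate g (coset_enum j))"
    if "i < subgroup_index" for i
    using coset_num_less[OF C] coset_enum_coset_num[OF C] coset_num_enum[OF that] by metis
  then show ?thesis using j coset_num_less[OF C] coset_enum_coset_num[OF C] unfolding coset_rep_def
    by (intro eq_vecI) (auto simp: unit_vec_def coset_num_enum)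
qed

lemma coset_rep_mult_unit_vec:
  "j < subgroup_index \<Longrightarrow>
    coset_rep g *\<^sub>v unit_vec subgroup_index j
      = unit_vec subgroup_index (coset_num (translate g (coset_enum j)))"
  using mult_unit_vec_eq_col[OF coset_rep_carrier] col_coset_rep by simp

lemma coset_rep_mult_unit_vec_coset_num:
  assumes "C \<in> left_cosets H"
  shows "coset_rep g *\<^sub>v unit_vec subgroup_index (coset_num C)
    = unit_vec subgroup_index (coset_num (translate g C))"
  using coset_rep_mult_unit_vec[OF coset_num_less[OF assms]] coset_enum_coset_num[OF assms] by simp

lemma unit_vec_coset_num_inj:
  assumes "C \<in> left_cosets H" "D \<in> left_cosets H"
    and "unit_vec subgroup_index (coset_num C)
      = (unit_vec subgroup_index (coset_num D) :: complex vec)"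
  shows "C = D"
  using assms coset_num_less[OF assms(1)] coset_enum_coset_num by (metis unit_vec_eq)

lemma coset_rep_add: "coset_rep (g + g') = coset_rep g * coset_rep g'"
proof (rule mat_col_eqI)
  fix j assume "j < dim_col (coset_rep g * coset_rep g')"
  then have j: "j < subgroup_index" by simp
  have C: "translate g' (coset_enum j) \<in> left_cosets H"
    using translate_in_left_cosets coset_enum_in j by blast
  show "col (coset_rep (g + g')) j = col (coset_rep g * coset_rep g') j"
    using col_mult2[OF coset_rep_carrier coset_rep_carrier j] col_coset_rep[OF j]
      coset_rep_mult_unit_vec[OF coset_num_less[OF C]] coset_enum_coset_num[OF C]
    by (simp add: translate_translate)
qed (use coset_rep_carrier in simp_all)

lemma coset_rep_mat_adjoint: "mat_adjoint (coset_rep g) = coset_rep (- g)"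
proof (rule eq_matI)
  fix i j assume "i < dim_row (coset_rep (- g))" "j < dim_col (coset_rep (- g))"
  then have "i < subgroup_index" "j < subgroup_index" by simp_all
  moreover have
    "translate g (coset_enum i) = coset_enum j \<longleftrightarrow> translate (- g) (coset_enum j) = coset_enum i"
    using translate_eq_iff[of g "coset_enum i" "coset_enum j"] by auto
  ultimately show "mat_adjoint (coset_rep g) $$ (i, j) = coset_rep (- g) $$ (i, j)"
    unfolding coset_rep_def by simp
qed (simp_all add: coset_rep_def)

lemma unitary_rep_coset_rep: "unitary_rep subgroup_index coset_rep"
  unfolding unitary_rep_def
proof (intro conjI allI impI)
  fix x
  show "coset_rep x \<in> carrier_mat subgroup_index subgroup_index" by (rule coset_rep_carrier)
  have "coset_rep 0 = 1\<^sub>m subgroup_index"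
    by (rule mat_col_eqI) (simp_all add: col_coset_rep coset_num_enum coset_rep_carrier)
  then show "mat_adjoint (coset_rep x) * coset_rep x = 1\<^sub>m subgroup_index"
    using coset_rep_mat_adjoint coset_rep_add[of "- x" x] by simp
next
  fix x y show "coset_rep (x + y) = coset_rep x * coset_rep y" by (rule coset_rep_add)
next
  fix i j assume i: "i < subgroup_index" and j: "j < subgroup_index"
  obtain a b where "coset_enum j = translate a H" "coset_enum i = translate b H"
    using coset_enum_in[OF i] coset_enum_in[OF j] unfolding left_cosets_eq by auto
  then show "continuous_on UNIV (\<lambda>x. coset_rep x $$ (i, j))"
    using continuous_on_coset_indicator[of a b] i j unfolding coset_rep_def by simp
qed

text \<open>The basis vector of the coset H is H-fixed.  If g + h - g is not in H for some h in H,
  then h moves the coset -g + H, so the translate of that vector by -g is not H-fixed.\<close>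
lemma coset_rep_moved_fixed_vec:
  assumes "\<not> normal_subgroup H"
  obtains v g where "v \<in> fixed_vecs subgroup_index coset_rep H"
    "coset_rep g *\<^sub>v v \<notin> fixed_vecs subgroup_index coset_rep H"
proof -
  obtain g h where h: "h \<in> H" and not_conj: "g + h + - g \<notin> H"
    using assms subgroup unfolding normal_subgroup_def by blast
  define v :: "complex vec" where "v = unit_vec subgroup_index (coset_num H)"
  have "v \<in> fixed_vecs subgroup_index coset_rep H"
    unfolding fixed_vecs_def v_def
    using coset_rep_mult_unit_vec_coset_num[OF self_in_left_cosets] translate_mem_H by simp
  moreover have "coset_rep (- g) *\<^sub>v v \<notin> fixed_vecs subgroup_index coset_rep H"
  proof
    define C where "C = translate (- g) H"
    have C: "C \<in> left_cosets H" unfolding C_def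
      by (rule translate_in_left_cosets[OF self_in_left_cosets])
    have "coset_rep (- g) *\<^sub>v v = unit_vec subgroup_index (coset_num C)"
      unfolding v_def C_def by (rule coset_rep_mult_unit_vec_coset_num[OF self_in_left_cosets])
    moreover assume "coset_rep (- g) *\<^sub>v v \<in> fixed_vecs subgroup_index coset_rep H"
    ultimately have "unit_vec subgroup_index (coset_num (translate h C))
        = (unit_vec subgroup_index (coset_num C) :: complex vec)"
      using h coset_rep_mult_unit_vec_coset_num[OF C] unfolding fixed_vecs_def by auto
    then have "translate h C = C"
      using unit_vec_coset_num_inj[OF translate_in_left_cosets[OF C] C] by blast
    then have "- (- g) + (h + - g) \<in> H"
      unfolding C_def translate_translate translate_eq_translate_iff .
    then show False using not_conj by (metis add.assoc minus_minus)
  qed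
  ultimately show thesis using that by blast
qed

lemma normal_iff_fixed_vecs_trivial_or_full:
  "normal_subgroup H \<longleftrightarrow>
    (\<forall>n \<rho>. irreducible_unitary_rep n \<rho> \<longrightarrow>
      fixed_vecs n \<rho> H = {0\<^sub>v n} \<or> fixed_vecs n \<rho> H = carrier_vec n)"
proof
  assume "normal_subgroup H"
  then show "\<forall>n \<rho>. irreducible_unitary_rep n \<rho> \<longrightarrow>
      fixed_vecs n \<rho> H = {0\<^sub>v n} \<or> fixed_vecs n \<rho> H = carrier_vec n"
    using fixed_vecs_trivial_or_full_if_normal by blast
next
  assume trivial_or_full: "\<forall>n \<rho>. irreducible_unitary_rep n \<rho> \<longrightarrow>
    fixed_vecs n \<rho> H = {0\<^sub>v n} \<or> fixed_vecs n \<rho> H = carrier_vec n"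
  show "normal_subgroup H"
  proof (rule ccontr)
    assume "\<not> normal_subgroup H"
    then obtain v g where "v \<in> fixed_vecs subgroup_index coset_rep H"
      "coset_rep g *\<^sub>v v \<notin> fixed_vecs subgroup_index coset_rep H"
      by (rule coset_rep_moved_fixed_vec)
    then obtain r \<tau> x where \<tau>: "irreducible_unitary_rep r \<tau>" and
      x: "x \<in> fixed_vecs r \<tau> H" "\<tau> g *\<^sub>v x \<notin> fixed_vecs r \<tau> H"
      using moved_fixed_vec_in_irreducible_rep[OF unitary_rep_coset_rep] by blast
    have "unitary_rep r \<tau>" using \<tau> unfolding irreducible_unitary_rep_def by simp
    moreover have "fixed_vecs r \<tau> H = {0\<^sub>v r} \<or> fixed_vecs r \<tau> H = carrier_vec r"
      using trivial_or_full \<tau> by blast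
    ultimately show False using fixed_vecs_proper_if_moved[OF _ x] by blast
  qed
qed

end

theorem mainTheorem8:
  fixes \<mu> :: "'g::{group_add, t2_space} measure" and H :: "'g set"
  assumes "compact_group TYPE('g)"
    and "normalized_haar \<mu>"
    and "is_subgroup H" and "closed H"
    and "finite (left_cosets H)"
  shows "normal_subgroup H \<longleftrightarrow>
    (\<forall>n \<rho>. irreducible_unitary_rep n \<rho> \<longrightarrow>
       mat_rank (fourier \<mu> (indicator H) n \<rho>) = n \<or>
       mat_rank (fourier \<mu> (indicator H) n \<rho>) = 0)"
proof -
  interpret haar_finite_index_subgroup \<mu> H using assms by unfold_locales
  have rank_iff:
    "mat_rank (fourier \<mu> (indicator H) n \<rho>) = n \<or> mat_rank (fourier \<mu> (indicator H) n \<rho>) = 0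
      \<longleftrightarrow> fixed_vecs n \<rho> H = {0\<^sub>v n} \<or> fixed_vecs n \<rho> H = carrier_vec n"
    if "irreducible_unitary_rep n \<rho>" for n \<rho>
  proof -
    have "unitary_rep n \<rho>" using that unfolding irreducible_unitary_rep_def by simp
    then show ?thesis
      using rank_fourier_indicator_eq_dim_iff[of n \<rho>] rank_fourier_indicator_eq_0_iff[of n \<rho>]
      by (simp add: disj_commute)
  qed
  show ?thesis unfolding normal_iff_fixed_vecs_trivial_or_full by (simp add: rank_iff)
qed

end
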